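(* Let $\mathcal{M}$ be a playable coalition model, $w\in W$, $\varphi\in\mathcal{L}_{CL}$, and $k$ a natural number. Then $\mathrm{Robustness}^w(\varphi)>k$ if and only if every coalition $C\subseteq N$ with $|C|\le k$ satisfies $\mathcal{M},w\models\mathrm{FI}_C(\varphi)$.
   Context: Let $N=\{1,\dots,n\}$ be a finite set of agents and $\mathrm{Prop}$ a countable set of atoms. The language $\mathcal{L}_{CL}$ is $\varphi ::= p \mid \neg\varphi \mid (\varphi\wedge\psi)\mid [C]\varphi$ ($p\in\mathrm{Prop}$, $C\subseteq N$). A coalition model is $\mathcal{M}=(W,E,V)$, $W$ nonempty, $E_w(C)\subseteq\mathcal{P}(W)$, $V:\mathrm{Prop}\to\mathcal{P}(W)$; $\mathcal{M},w\models[C]\varphi$ iff $\{u\mid\mathcal{M},u\models\varphi\}\in E_w(C)$, Boolean clauses classical. Playability of $E_w$: for all $C,D\subseteq N$, $X,Y\subseteq W$: $\emptyset\notin E_w(C)$; $W\in E_w(C)$; $X\in E_w(C)$, $X\subseteq Y$ imply $Y\in E_w(C)$; $C\cap D=\emptyset$, $X\in E_w(C)$, $Y\in E_w(D)$ imply $X\cap Y\in E_w(C\cup D)$; $X\notin E_w(\emptyset)$ iff $W\setminus X\in E_w(N)$; the model is playable if each $E_w$ is. $\mathrm{FI}_C(\varphi)=\neg[C]\varphi\wedge\neg[C]\neg\varphi$. Inability threshold: $\mathcal{C}^w_{\min}(\varphi)=\{C\subseteq N\mid\mathcal{M},w\not\models\mathrm{FI}_C(\varphi)\text{ and }\mathcal{M},w\models\mathrm{FI}_D(\varphi)\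 \forall D\subsetneq C\}$. $\mathrm{Robustness}^w(\varphi)=\min\{|C|: C\in\mathcal{C}^w_{\min}(\varphi)\}$ if this family is nonempty, and $\infty$ otherwise. *)

theory Defs
  imports Main "HOL-Library.Extended_Nat"
begin

datatype 'p fm =
    Atom 'p
  | Neg "'p fm"
  | Conj "'p fm" "'p fm"
  | Coal "nat set" "'p fm"

record ('w, 'p) cmodel =
  W :: "'w set"
  E :: "'w \<Rightarrow> nat set \<Rightarrow> 'w set set"
  V :: "'p \<Rightarrow> 'w set"

fun sat :: "('w, 'p) cmodel \<Rightarrow> 'w \<Rightarrow> 'p fm \<Rightarrow> bool" where
  "sat M w (Atom p) = (w \<in> V M p)"
| "sat M w (Neg \<phi>) = (\<not> sat M w \<phi>)"
| "sat M w (Conj \<phi> \<psi>) = (sat M w \<phi> \<and> sat M w \<psi>)"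
| "sat M w (Coal C \<phi>) = ({u \<in> W M. sat M u \<phi>} \<in> E M w C)"

definition agents :: "nat \<Rightarrow> nat set" where
  "agents n = {1..n}"

definition playable_at :: "nat \<Rightarrow> ('w, 'p) cmodel \<Rightarrow> 'w \<Rightarrow> bool" where
  "playable_at n M w \<longleftrightarrow>
     (\<forall>C \<subseteq> agents n. {} \<notin> E M w C) \<and>
     (\<forall>C \<subseteq> agents n. W M \<in> E M w C) \<and>
     (\<forall>C \<subseteq> agents n. \<forall>X Y. X \<subseteq> W M \<longrightarrow> Y \<subseteq> W M \<longrightarrow> X \<in> E M w C \<longrightarrow> X \<subseteq> Y \<longrightarrow> Y \<in> E M w C) \<and>
     (\<forall>C \<subseteq> agents n. \<forall>D \<subseteq> agents n. \<forall>X Y. X \<subseteq> W M \<longrightarrow> Y \<subseteq> W M \<longrightarrow>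
        C \<inter> D = {} \<longrightarrow> X \<in> E M w C \<longrightarrow> Y \<in> E M w D \<longrightarrow> X \<inter> Y \<in> E M w (C \<union> D)) \<and>
     (\<forall>X. X \<subseteq> W M \<longrightarrow> (X \<notin> E M w {} \<longleftrightarrow> W M - X \<in> E M w (agents n)))"

definition playable :: "nat \<Rightarrow> ('w, 'p) cmodel \<Rightarrow> bool" where
  "playable n M \<longleftrightarrow> W M \<noteq> {} \<and> (\<forall>w \<in> W M. \<forall>C \<subseteq> agents n. E M w C \<subseteq> Pow (W M))
      \<and> (\<forall>w \<in> W M. playable_at n M w)"

definition FI :: "nat set \<Rightarrow> 'p fm \<Rightarrow> 'p fm" where
  "FI C \<phi> = Conj (Neg (Coal C \<phi>)) (Neg (Coal C (Neg \<phi>)))"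

definition Cmin :: "nat \<Rightarrow> ('w, 'p) cmodel \<Rightarrow> 'w \<Rightarrow> 'p fm \<Rightarrow> nat set set" where
  "Cmin n M w \<phi> = {C. C \<subseteq> agents n \<and> \<not> sat M w (FI C \<phi>) \<and>
                         (\<forall>D. D \<subset> C \<longrightarrow> sat M w (FI D \<phi>))}"

definition Robustness :: "nat \<Rightarrow> ('w, 'p) cmodel \<Rightarrow> 'w \<Rightarrow> 'p fm \<Rightarrow> enat" where
  "Robustness n M w \<phi> =
     (if Cmin n M w \<phi> = {} then \<infinity> else enat (Min (card ` Cmin n M w \<phi>)))"

end

theory Submission
  imports Defs
begin

text \<open>Every coalition at which \<open>FI\<close> fails contains an inclusion-minimal one, which is no
  larger; hence the least size of a minimal such coalition is the least size of any such coalition.\<close>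

lemma ex_minimal_subset:
  assumes "finite C" and "\<not> P C"
  shows "\<exists>D \<subseteq> C. \<not> P D \<and> (\<forall>D'. D' \<subset> D \<longrightarrow> P D')"
  using assms
proof (induction C rule: finite_psubset_induct)
  case (psubset C)
  show ?case
  proof (cases "\<forall>D'. D' \<subset> C \<longrightarrow> P D'")
    case True
    with psubset.prems show ?thesis by blast
  next
    case False
    then obtain D' where "D' \<subset> C" "\<not> P D'" by blast
    with psubset.IH show ?thesis by (meson order.trans psubset_imp_subset)
  qed
qed

lemma finite_coalition: "C \<subseteq> agents n \<Longrightarrow> finite C"
  unfolding agents_def using finite_subset by blast

lemma finite_Cmin: "finite (Cmin n M w \<phi>)"
  unfolding Cmin_def agents_def by auto

lemma Cmin_below_non_FI:
  assumes "C \<subseteq> agents n" and "\<not> sat M w (FI C \<phi>)"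
  shows "\<exists>D \<in> Cmin n M w \<phi>. D \<subseteq> C"
proof -
  obtain D where "D \<subseteq> C" "\<not> sat M w (FI D \<phi>)" "\<forall>D'. D' \<subset> D \<longrightarrow> sat M w (FI D' \<phi>)"
    using ex_minimal_subset[OF finite_coalition[OF assms(1)], of "\<lambda>D. sat M w (FI D \<phi>)"] assms(2)
    by blast
  with assms(1) show ?thesis
    unfolding Cmin_def by blast
qed

lemma Robustness_le_iff:
  "Robustness n M w \<phi> \<le> enat m \<longleftrightarrow>
     (\<exists>C. C \<subseteq> agents n \<and> card C \<le> m \<and> \<not> sat M w (FI C \<phi>))"
proof
  assume le: "Robustness n M w \<phi> \<le> enat m"
  then have nonempty: "Cmin n M w \<phi> \<noteq> {}"
    unfolding Robustness_def by auto
  then obtain C where C: "C \<in> Cmin n M w \<phi>" "card C = Min (card ` Cmin n M w \<phi>)"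
    using Min_in[of "card ` Cmin n M w \<phi>"] finite_Cmin by fastforce
  with le nonempty have "card C \<le> m"
    unfolding Robustness_def by simp
  with C(1) show "\<exists>C. C \<subseteq> agents n \<and> card C \<le> m \<and> \<not> sat M w (FI C \<phi>)"
    unfolding Cmin_def by blast
next
  assume "\<exists>C. C \<subseteq> agents n \<and> card C \<le> m \<and> \<not> sat M w (FI C \<phi>)"
  then obtain C where C: "C \<subseteq> agents n" "card C \<le> m" "\<not> sat M w (FI C \<phi>)"
    by blast
  obtain D where D: "D \<in> Cmin n M w \<phi>" "D \<subseteq> C"
    using Cmin_below_non_FI[OF C(1,3)] by blast
  have "card D \<le> card C"
    using finite_coalition[OF C(1)] D(2) by (rule card_mono)
  moreover have "Min (card ` Cmin n M w \<phi>) \<le> card D"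
    using D(1) finite_Cmin[of n M w \<phi>] by simp
  ultimately have "Min (card ` Cmin n M w \<phi>) \<le> m"
    using C(2) by linarith
  with D(1) show "Robustness n M w \<phi> \<le> enat m"
    unfolding Robustness_def by auto
qed

theorem mainTheorem15:
  fixes M :: "('w, 'p) cmodel" and n k :: nat and w :: 'w and \<phi> :: "'p fm"
  assumes "playable n M" and "w \<in> W M"
  shows "Robustness n M w \<phi> > enat k \<longleftrightarrow>
         (\<forall>C. C \<subseteq> agents n \<longrightarrow> card C \<le> k \<longrightarrow> sat M w (FI C \<phi>))"
  unfolding not_le[symmetric] Robustness_le_iff by blast

end
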